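(* On $\mathbb C^2\otimes\mathbb C^2$, let $|\pm\rangle=(|0\rangle\pm|1\rangle)/\sqrt2$, let $\rho_1=\tfrac12(|00\rangle\langle00|+|{+}{+}\rangle\langle{+}{+}|)$, and let $\rho_3=|\psi\rangle\langle\psi|$ with $|\psi\rangle$ the normalization of $\alpha|1\rangle|-\rangle+\beta|-\rangle|1\rangle$, where $\alpha\beta\neq0$. Then $\rho_1$ and $\rho_3$ are orthogonal and $\{\rho_1,\rho_3\}$ is not perfectly distinguishable by LOCC.
   Context: "Perfectly distinguishable by LOCC": a finite-round protocol of local measurements by the two parties with broadcast of outcomes identifies the given state with probability 1. States are orthogonal if $\mathrm{tr}(\rho_1\rho_3)=0$. *)

theory Defs
  imports "Jordan_Normal_Form.Matrix"
begin

definition mtrace :: "complex mat \<Rightarrow> complex" where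
  "mtrace A = (\<Sum>i<dim_row A. A $$ (i, i))"

definition adj :: "complex mat \<Rightarrow> complex mat" where
  "adj A = mat (dim_col A) (dim_row A) (\<lambda>(i, j). cnj (A $$ (j, i)))"

text \<open>Kronecker (tensor) product of matrices and of vectors, standard basis ordering
  |00>, |01>, |10>, |11>.\<close>
definition kron :: "complex mat \<Rightarrow> complex mat \<Rightarrow> complex mat" where
  "kron A B = mat (dim_row A * dim_row B) (dim_col A * dim_col B)
     (\<lambda>(i, j). A $$ (i div dim_row B, j div dim_col B) * B $$ (i mod dim_row B, j mod dim_col B))"

definition kron_vec :: "complex vec \<Rightarrow> complex vec \<Rightarrow> complex vec" where
  "kron_vec v w = vec (dim_vec v * dim_vec w) (\<lambda>i. v $ (i div dim_vec w) * w $ (i mod dim_vec w))"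

definition proj :: "complex vec \<Rightarrow> complex mat" where
  "proj v = mat (dim_vec v) (dim_vec v) (\<lambda>(i, j). v $ i * cnj (v $ j))"

definition vnorm :: "complex vec \<Rightarrow> real" where
  "vnorm v = sqrt (\<Sum>i<dim_vec v. (cmod (v $ i))\<^sup>2)"

definition ket0 :: "complex vec" where "ket0 = vec_of_list [1, 0]"
definition ket1 :: "complex vec" where "ket1 = vec_of_list [0, 1]"
definition ketp :: "complex vec" where
  "ketp = vec_of_list [1 / complex_of_real (sqrt 2), 1 / complex_of_real (sqrt 2)]"
definition ketm :: "complex vec" where
  "ketm = vec_of_list [1 / complex_of_real (sqrt 2), - 1 / complex_of_real (sqrt 2)]"

definition rho1 :: "complex mat" where
  "rho1 = (1 / 2 :: complex) \<cdot>\<^sub>m (proj (kron_vec ket0 ket0) + proj (kron_vec ketp ketp))"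

definition psi_unnorm :: "complex \<Rightarrow> complex \<Rightarrow> complex vec" where
  "psi_unnorm \<alpha> \<beta> = \<alpha> \<cdot>\<^sub>v kron_vec ket1 ketm + \<beta> \<cdot>\<^sub>v kron_vec ketm ket1"

definition psi :: "complex \<Rightarrow> complex \<Rightarrow> complex vec" where
  "psi \<alpha> \<beta> = complex_of_real (1 / vnorm (psi_unnorm \<alpha> \<beta>)) \<cdot>\<^sub>v psi_unnorm \<alpha> \<beta>"

definition rho3 :: "complex \<Rightarrow> complex \<Rightarrow> complex mat" where
  "rho3 \<alpha> \<beta> = proj (psi \<alpha> \<beta>)"

text \<open>The predicate
  locc_from S M says: when the (unnormalised) branch of the protocol so far has
  accumulated Kraus operator M (a 4x4 matrix), the remaining finitely many rounds of
  local measurements by Alice (first factor) or Bob (second factor), with all outcomes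
  broadcast, can identify the state with certainty. At a leaf a guess sigma in S is
  made, and every other state tau must have probability tr(M tau M^dagger) = 0 of
  reaching this leaf. The inductive (least fixed point) definition enforces finitely
  many rounds.\<close>

definition is_local_measurement :: "complex mat list \<Rightarrow> bool" where
  "is_local_measurement Ks \<longleftrightarrow>
     (\<forall>K\<in>set Ks. K \<in> carrier_mat 2 2) \<and>
     (\<forall>i<2. \<forall>j<2. (\<Sum>K\<leftarrow>Ks. (adj K * K) $$ (i, j)) = (if i = j then 1 else 0))"

inductive locc_from :: "complex mat set \<Rightarrow> complex mat \<Rightarrow> bool" for S where
  leaf: "\<sigma> \<in> S \<Longrightarrow> (\<forall>\<tau>\<in>S. \<tau> \<noteq> \<sigma> \<longrightarrow> mtrace (M * \<tau> * adj M) = 0) \<Longrightarrow> locc_from S M"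
| alice: "is_local_measurement Ks \<Longrightarrow> (\<forall>K\<in>set Ks. locc_from S (kron K (1\<^sub>m 2) * M))
          \<Longrightarrow> locc_from S M"
| bob: "is_local_measurement Ks \<Longrightarrow> (\<forall>K\<in>set Ks. locc_from S (kron (1\<^sub>m 2) K * M))
          \<Longrightarrow> locc_from S M"

definition locc_perfectly_distinguishable :: "complex mat set \<Rightarrow> bool" where
  "locc_perfectly_distinguishable S \<longleftrightarrow> locc_from S (1\<^sub>m 4)"

end

theory Submission
  imports Defs
begin

(* For the impossibility we follow a branch of an LOCC protocol through its accumulated
   Kraus operator M and prove, by induction over the finite protocol tree, the invariant
     (I1) M |00> and M |++> are both orthogonal to M phi, and
     (I2) M is not a nonzero multiple of a local unitary A (x) B.
   At a leaf one of the two states is annihilated, which gives (I1) and (I2).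
   (I1) passes from the children to the parent because the Kraus operators of a local
   measurement resolve the identity.  (I2) is the heart of the argument: if M is a scaled
   local unitary and every child satisfies (I1), then for each Kraus operator K the Gram
   matrix of K A (or K B) is forced by (I1) to be a multiple of the identity, and some
   branch has a nonzero multiple, so that child is again a scaled local unitary.
   Since the identity is a scaled local unitary, no protocol can start at 1.
   The file develops inner products and traces, Kronecker products of qubit operators and
   local measurements, the concrete states, and finally the invariant. *)

lemma sum_lessThan_2: "(\<Sum>i<(2::nat). f i) = f 0 + f 1"
  by (simp add: eval_nat_numeral)

lemma sum_lessThan_4: "(\<Sum>i<(4::nat). f i) = f 0 + f 1 + f 2 + f 3"
  by (simp add: eval_nat_numeral)

lemma less_2_iff: "(i::nat) < 2 \<longleftrightarrow> i = 0 \<or> i = 1"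
  by auto

lemma less_4_iff: "(i::nat) < 4 \<longleftrightarrow> i = 0 \<or> i = 1 \<or> i = 2 \<or> i = 3"
  by auto

section \<open>Inner products and traces\<close>

definition cinner :: "complex vec \<Rightarrow> complex vec \<Rightarrow> complex" where
  "cinner x y = (\<Sum>i<dim_vec y. cnj (x $ i) * y $ i)"

lemma cinner_mult_mat:
  assumes M: "M \<in> carrier_mat n m" and x: "dim_vec x = m" and y: "dim_vec y = m"
  shows "cinner (M *\<^sub>v x) (M *\<^sub>v y) = cinner x ((adj M * M) *\<^sub>v y)"
proof -
  have "cinner (M *\<^sub>v x) (M *\<^sub>v y) =
      (\<Sum>i<n. \<Sum>j<m. \<Sum>k<m. cnj (M$$(i,j)) * cnj (x$j) * (M$$(i,k) * y$k))"
    using M x y unfolding cinner_def by (simp add: scalar_prod_def atLeast0LessThan sum_product)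
  also have "\<dots> = (\<Sum>j<m. \<Sum>k<m. \<Sum>i<n. cnj (M$$(i,j)) * cnj (x$j) * (M$$(i,k) * y$k))"
    by (simp add: sum.swap[of _ "{..<n}"])
  also have "\<dots> = (\<Sum>j<m. cnj (x$j) * (\<Sum>k<m. (\<Sum>i<n. cnj (M$$(i,j)) * M$$(i,k)) * y$k))"
    by (simp add: sum_distrib_left sum_distrib_right mult_ac)
  also have "\<dots> = cinner x ((adj M * M) *\<^sub>v y)"
    using M x y unfolding cinner_def by (simp add: adj_def scalar_prod_def atLeast0LessThan)
  finally show ?thesis .
qed

lemma cinner_self: "cinner x x = complex_of_real (\<Sum>i<dim_vec x. (cmod (x$i))\<^sup>2)"
  unfolding cinner_def of_real_sum
  by (rule sum.cong, rule refl, metis complex_norm_square mult.commute)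

lemma sum_sq_eq_0: "(\<Sum>i<dim_vec x. (cmod (x$i))\<^sup>2) = 0 \<Longrightarrow> i < dim_vec x \<Longrightarrow> x $ i = 0"
  by (subst (asm) sum_nonneg_eq_0_iff) auto

lemma cinner_self_eq_0: "cinner x x = 0 \<Longrightarrow> i < dim_vec x \<Longrightarrow> x $ i = 0"
  unfolding cinner_self of_real_eq_0_iff by (rule sum_sq_eq_0)

lemma cinner_self_add_eq_0:
  assumes "cinner x x + cinner y y = 0"
  shows "\<forall>i<dim_vec x. x $ i = 0" and "\<forall>i<dim_vec y. y $ i = 0"
proof -
  let ?s = "\<Sum>i<dim_vec x. (cmod (x$i))\<^sup>2" and ?t = "\<Sum>i<dim_vec y. (cmod (y$i))\<^sup>2"
  have "?s + ?t = 0"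
    using assms unfolding cinner_self by (simp only: of_real_add [symmetric] of_real_eq_0_iff)
  moreover have "?s \<ge> 0" "?t \<ge> 0" by (auto intro: sum_nonneg)
  ultimately have "?s = 0" "?t = 0" by linarith+
  then show "\<forall>i<dim_vec x. x $ i = 0" and "\<forall>i<dim_vec y. y $ i = 0"
    by (auto intro: sum_sq_eq_0)
qed

lemma cinner_zero_left: "\<forall>i<dim_vec y. x $ i = 0 \<Longrightarrow> cinner x y = 0"
  by (simp add: cinner_def)

lemma cinner_zero_right: "\<forall>i<dim_vec y. y $ i = 0 \<Longrightarrow> cinner x y = 0"
  by (simp add: cinner_def)

lemma smult_one_mult_mat_vec: "dim_vec (v :: complex vec) = n \<Longrightarrow> (c \<cdot>\<^sub>m 1\<^sub>m n) *\<^sub>v v = c \<cdot>\<^sub>v v"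
proof (rule eq_vecI)
  fix i assume "dim_vec v = n" and "i < dim_vec (c \<cdot>\<^sub>v v)"
  then show "((c \<cdot>\<^sub>m 1\<^sub>m n) *\<^sub>v v) $ i = (c \<cdot>\<^sub>v v) $ i"
    by (simp add: scalar_prod_def atLeast0LessThan) (subst sum.remove[of _ i]; auto)
qed simp

lemma cinner_smult_one: "dim_vec v = n \<Longrightarrow> cinner u ((c \<cdot>\<^sub>m 1\<^sub>m n) *\<^sub>v v) = c * cinner u v"
  by (simp add: smult_one_mult_mat_vec cinner_def sum_distrib_left mult_ac)

definition resolves_identity :: "nat \<Rightarrow> complex mat list \<Rightarrow> bool" where
  "resolves_identity n Gs \<longleftrightarrow>
     (\<forall>i<n. \<forall>j<n. (\<Sum>G\<leftarrow>Gs. G $$ (i, j)) = (if i = j then 1 else 0))"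

lemma sum_list_sum_swap: "(\<Sum>K\<leftarrow>Ks. \<Sum>i\<in>I. f K i) = (\<Sum>i\<in>I. \<Sum>K\<leftarrow>Ks. f K i)"
  by (induction Ks) (auto simp: sum.distrib)

lemma cinner_resolution:
  assumes G: "\<forall>K\<in>set Ks. G K \<in> carrier_mat n n" and S: "resolves_identity n (map G Ks)"
    and q: "dim_vec q = n"
  shows "(\<Sum>K\<leftarrow>Ks. cinner p (G K *\<^sub>v q)) = cinner p q"
proof -
  have "(\<Sum>K\<leftarrow>Ks. cinner p (G K *\<^sub>v q)) = (\<Sum>K\<leftarrow>Ks. \<Sum>i<n. \<Sum>j<n. cnj (p$i) * q$j * G K $$ (i,j))"
    using G q by (intro arg_cong[where f = sum_list] map_cong refl)
      (auto simp: cinner_def scalar_prod_def atLeast0LessThan sum_distrib_left mult_ac)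
  also have "\<dots> = (\<Sum>i<n. \<Sum>j<n. cnj (p$i) * q$j * (\<Sum>K\<leftarrow>Ks. G K $$ (i,j)))"
    by (simp add: sum_list_sum_swap sum_list_const_mult)
  also have "\<dots> = (\<Sum>i<n. \<Sum>j<n. cnj (p$i) * q$j * (if i = j then 1 else 0))"
    using S unfolding resolves_identity_def by (intro sum.cong refl) (auto simp: comp_def)
  also have "\<dots> = cinner p q" using q by (simp add: cinner_def if_distrib cong: if_cong)
  finally show ?thesis .
qed

lemma trace_sandwich:
  assumes M: "M \<in> carrier_mat n m" and X: "X \<in> carrier_mat m m"
  shows "mtrace (M * X * adj M) = (\<Sum>i<n. \<Sum>k<m. \<Sum>j<m. M$$(i,j) * X$$(j,k) * cnj (M$$(i,k)))"
  using M X unfolding mtrace_def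
  by (simp add: adj_def scalar_prod_def atLeast0LessThan sum_distrib_right)

lemma proj_carrier: "dim_vec v = m \<Longrightarrow> proj v \<in> carrier_mat m m"
  by (simp add: proj_def)

lemma trace_sandwich_proj:
  assumes M: "M \<in> carrier_mat n m" and v: "dim_vec v = m"
  shows "mtrace (M * proj v * adj M) = cinner (M *\<^sub>v v) (M *\<^sub>v v)"
proof -
  have "mtrace (M * proj v * adj M) =
      (\<Sum>i<n. \<Sum>k<m. \<Sum>j<m. M$$(i,j) * (v$j * cnj (v$k)) * cnj (M$$(i,k)))"
    using trace_sandwich[OF M proj_carrier[OF v]] v by (simp add: proj_def)
  also have "\<dots> = cinner (M *\<^sub>v v) (M *\<^sub>v v)"
    using M v unfolding cinner_def
    by (simp add: scalar_prod_def atLeast0LessThan sum_product sum_distrib_left mult_ac)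
  finally show ?thesis .
qed

section \<open>Kronecker products of qubit operators and local measurements\<close>

lemma kron_carrier: "A \<in> carrier_mat 2 2 \<Longrightarrow> B \<in> carrier_mat 2 2 \<Longrightarrow> kron A B \<in> carrier_mat 4 4"
  by (simp add: kron_def)

lemma kron_entry:
  "X \<in> carrier_mat 2 2 \<Longrightarrow> Y \<in> carrier_mat 2 2 \<Longrightarrow> i < 4 \<Longrightarrow> j < 4 \<Longrightarrow>
   kron X Y $$ (i,j) = X $$ (i div 2, j div 2) * Y $$ (i mod 2, j mod 2)"
  by (simp add: kron_def)

lemma gram_carrier: "X \<in> carrier_mat n m \<Longrightarrow> adj X * X \<in> carrier_mat m m"
  unfolding carrier_mat_def adj_def by auto

lemma gram_one: "adj (1\<^sub>m 2) * 1\<^sub>m 2 = 1\<^sub>m 2"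
  by (rule eq_matI) (auto simp: adj_def less_2_iff scalar_prod_def atLeast0LessThan sum_lessThan_2)

lemma kron_one: "(1\<^sub>m 4 :: complex mat) = kron (1\<^sub>m 2) (1\<^sub>m 2)"
  by (rule eq_matI) (auto simp: kron_def less_4_iff)

lemma kron_smult_one: "kron (x \<cdot>\<^sub>m 1\<^sub>m 2) (y \<cdot>\<^sub>m 1\<^sub>m 2) = (x * y) \<cdot>\<^sub>m (1\<^sub>m 4 :: complex mat)"
  by (rule eq_matI) (auto simp: kron_def less_4_iff)

lemma kron_mult:
  assumes "A \<in> carrier_mat 2 2" "B \<in> carrier_mat 2 2" "C \<in> carrier_mat 2 2" "D \<in> carrier_mat 2 2"
  shows "kron A B * kron C D = kron (A * C) (B * D)"
proof (rule eq_matI)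
  fix i j assume "i < dim_row (kron (A * C) (B * D))" "j < dim_col (kron (A * C) (B * D))"
  hence "i < 4" "j < 4" using assms by (auto simp: kron_def)
  thus "(kron A B * kron C D) $$ (i, j) = kron (A * C) (B * D) $$ (i, j)"
    using assms unfolding less_4_iff
    by (auto simp: kron_def scalar_prod_def atLeast0LessThan sum_lessThan_4 sum_lessThan_2 algebra_simps)
qed (use assms in \<open>auto simp: kron_def\<close>)

lemma gram_kron:
  assumes "A \<in> carrier_mat 2 2" "B \<in> carrier_mat 2 2"
  shows "adj (kron A B) * kron A B = kron (adj A * A) (adj B * B)"
proof (rule eq_matI)
  fix i j assume "i < dim_row (kron (adj A * A) (adj B * B))" "j < dim_col (kron (adj A * A) (adj B * B))"
  hence "i < 4" "j < 4" using assms by (auto simp: kron_def adj_def)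
  thus "(adj (kron A B) * kron A B) $$ (i, j) = kron (adj A * A) (adj B * B) $$ (i, j)"
    using assms unfolding less_4_iff
    by (auto simp: kron_def adj_def scalar_prod_def atLeast0LessThan sum_lessThan_4 sum_lessThan_2 algebra_simps)
qed (use assms in \<open>auto simp: kron_def adj_def\<close>)

lemma gram_mult:
  assumes "K \<in> carrier_mat 2 2" "A \<in> carrier_mat 2 2"
  shows "adj (K * A) * (K * A) = adj A * (adj K * K) * A"
proof (rule eq_matI)
  fix i j assume "i < dim_row (adj A * (adj K * K) * A)" "j < dim_col (adj A * (adj K * K) * A)"
  hence "i < 2" "j < 2" using assms by (auto simp: adj_def)
  thus "(adj (K * A) * (K * A)) $$ (i, j) = (adj A * (adj K * K) * A) $$ (i, j)"
    using assms unfolding less_2_iff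
    by (auto simp: adj_def scalar_prod_def atLeast0LessThan sum_lessThan_2 algebra_simps)
qed (use assms in \<open>auto simp: adj_def\<close>)

lemma gram_hermitian:
  "X \<in> carrier_mat 2 2 \<Longrightarrow> (adj X * X) $$ (1,0) = cnj ((adj X * X) $$ (0,1))"
  by (simp add: adj_def scalar_prod_def atLeast0LessThan sum_lessThan_2 mult.commute)

lemma local_measurement_carrier: "is_local_measurement Ks \<Longrightarrow> K \<in> set Ks \<Longrightarrow> K \<in> carrier_mat 2 2"
  by (simp add: is_local_measurement_def)

lemma local_measurement_resolves_identity:
  "is_local_measurement Ks \<Longrightarrow> resolves_identity 2 (map (\<lambda>K. adj K * K) Ks)"
  by (simp add: is_local_measurement_def resolves_identity_def comp_def)

lemma div_mod_2_eq_iff: "((i::nat) div 2 = j div 2 \<and> i mod 2 = j mod 2) \<longleftrightarrow> i = j"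
  by (metis div_mult_mod_eq)

lemma resolves_identity_kron_left:
  assumes F: "\<forall>K\<in>set Ks. F K \<in> carrier_mat 2 2" and S: "resolves_identity 2 (map F Ks)"
  shows "resolves_identity 4 (map (\<lambda>K. kron (F K) (1\<^sub>m 2)) Ks)"
  unfolding resolves_identity_def
proof (intro allI impI)
  fix i j :: nat assume i: "i < 4" and j: "j < 4"
  have "(\<Sum>G\<leftarrow>map (\<lambda>K. kron (F K) (1\<^sub>m 2)) Ks. G $$ (i, j))
      = (\<Sum>K\<leftarrow>Ks. F K $$ (i div 2, j div 2)) * (1\<^sub>m 2 :: complex mat) $$ (i mod 2, j mod 2)"
    using F i j by (simp add: comp_def kron_entry sum_list_mult_const cong: map_cong)
  also have "\<dots> = (if i = j then 1 else 0)"
    using S i j div_mod_2_eq_iff[of i j] unfolding resolves_identity_def by (auto simp: comp_def)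
  finally show "(\<Sum>G\<leftarrow>map (\<lambda>K. kron (F K) (1\<^sub>m 2)) Ks. G $$ (i, j)) = (if i = j then 1 else 0)" .
qed

lemma resolves_identity_kron_right:
  assumes F: "\<forall>K\<in>set Ks. F K \<in> carrier_mat 2 2" and S: "resolves_identity 2 (map F Ks)"
  shows "resolves_identity 4 (map (\<lambda>K. kron (1\<^sub>m 2) (F K)) Ks)"
  unfolding resolves_identity_def
proof (intro allI impI)
  fix i j :: nat assume i: "i < 4" and j: "j < 4"
  have "(\<Sum>G\<leftarrow>map (\<lambda>K. kron (1\<^sub>m 2) (F K)) Ks. G $$ (i, j))
      = (1\<^sub>m 2 :: complex mat) $$ (i div 2, j div 2) * (\<Sum>K\<leftarrow>Ks. F K $$ (i mod 2, j mod 2))"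
    using F i j by (simp add: comp_def kron_entry sum_list_const_mult cong: map_cong)
  also have "\<dots> = (if i = j then 1 else 0)"
    using S i j div_mod_2_eq_iff[of i j] unfolding resolves_identity_def by (auto simp: comp_def)
  finally show "(\<Sum>G\<leftarrow>map (\<lambda>K. kron (1\<^sub>m 2) (F K)) Ks. G $$ (i, j)) = (if i = j then 1 else 0)" .
qed

lemma local_measurement_left:
  assumes m: "is_local_measurement Ks"
  shows "resolves_identity 4 (map (\<lambda>K. adj (kron K (1\<^sub>m 2)) * kron K (1\<^sub>m 2)) Ks)"
proof -
  have "map (\<lambda>K. adj (kron K (1\<^sub>m 2)) * kron K (1\<^sub>m 2)) Ks = map (\<lambda>K. kron (adj K * K) (1\<^sub>m 2)) Ks"
    using local_measurement_carrier[OF m] by (auto simp: gram_kron gram_one)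
  then show ?thesis
    using m by (simp only:) (intro resolves_identity_kron_left local_measurement_resolves_identity;
      auto intro: gram_carrier local_measurement_carrier)
qed

lemma local_measurement_right:
  assumes m: "is_local_measurement Ks"
  shows "resolves_identity 4 (map (\<lambda>K. adj (kron (1\<^sub>m 2) K) * kron (1\<^sub>m 2) K) Ks)"
proof -
  have "map (\<lambda>K. adj (kron (1\<^sub>m 2) K) * kron (1\<^sub>m 2) K) Ks = map (\<lambda>K. kron (1\<^sub>m 2) (adj K * K)) Ks"
    using local_measurement_carrier[OF m] by (auto simp: gram_kron gram_one)
  then show ?thesis
    using m by (simp only:) (intro resolves_identity_kron_right local_measurement_resolves_identity;
      auto intro: gram_carrier local_measurement_carrier)
qed

lemma local_measurement_gram_00:
  assumes m: "is_local_measurement Ks" and A: "A \<in> carrier_mat 2 2"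
  shows "(\<Sum>K\<leftarrow>Ks. (adj (K * A) * (K * A)) $$ (0,0)) = (adj A * A) $$ (0,0)"
proof -
  have "(adj (K * A) * (K * A)) $$ (0,0) =
      (\<Sum>p<2. \<Sum>q<2. cnj (A$$(p,0)) * A$$(q,0) * (adj K * K) $$ (p,q))" if "K \<in> set Ks" for K
    using local_measurement_carrier[OF m that] A
    by (simp add: gram_mult adj_def scalar_prod_def atLeast0LessThan sum_lessThan_2 algebra_simps)
  then have "(\<Sum>K\<leftarrow>Ks. (adj (K * A) * (K * A)) $$ (0,0))
     = (\<Sum>K\<leftarrow>Ks. \<Sum>p<2. \<Sum>q<2. cnj (A$$(p,0)) * A$$(q,0) * (adj K * K) $$ (p,q))"
    by (intro arg_cong[where f = sum_list] map_cong refl)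
  also have "\<dots> = (\<Sum>p<2. \<Sum>q<2. cnj (A$$(p,0)) * A$$(q,0) * (\<Sum>K\<leftarrow>Ks. (adj K * K) $$ (p,q)))"
    by (simp add: sum_list_sum_swap sum_list_const_mult)
  also have "\<dots> = (adj A * A) $$ (0,0)"
    using m A unfolding is_local_measurement_def
    by (simp add: sum_lessThan_2 adj_def scalar_prod_def atLeast0LessThan)
  finally show ?thesis .
qed

lemma local_measurement_nonvanishing_branch:
  assumes m: "is_local_measurement Ks" and A: "A \<in> carrier_mat 2 2"
    and nz: "(adj A * A) $$ (0,0) \<noteq> 0"
  shows "\<exists>K\<in>set Ks. (adj (K * A) * (K * A)) $$ (0,0) \<noteq> 0"
proof (rule ccontr)
  assume "\<not> ?thesis"
  then have "(\<Sum>K\<leftarrow>Ks. (adj (K * A) * (K * A)) $$ (0,0)) = 0"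
    by (induction Ks) auto
  then show False using local_measurement_gram_00[OF m A] nz by simp
qed

text \<open>A Hermitian 2x2 matrix with \<open>F01 = 0\<close> and \<open><+|F|-> = 0\<close> is a multiple of the identity.\<close>
lemma hermitian_2x2_scalar:
  fixes F :: "complex mat"
  assumes F: "F \<in> carrier_mat 2 2" and h: "F$$(1,0) = cnj (F$$(0,1))"
    and c: "c \<noteq> 0" and d: "d \<noteq> 0" and e1: "c * F$$(0,1) = 0"
    and e2: "d * (F$$(0,0) + F$$(1,0) - F$$(0,1) - F$$(1,1)) = 0"
  shows "F = F$$(0,0) \<cdot>\<^sub>m 1\<^sub>m 2"
proof -
  have "F$$(0,1) = 0" using e1 c by simp
  moreover have "F$$(1,0) = 0" using h \<open>F$$(0,1) = 0\<close> by simp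
  moreover have "F$$(1,1) = F$$(0,0)" using e2 d \<open>F$$(0,1) = 0\<close> \<open>F$$(1,0) = 0\<close> by simp
  ultimately show ?thesis by (intro eq_matI) (use F in \<open>auto simp: less_2_iff\<close>)
qed

section \<open>The two states\<close>

definition invsqrt2 :: complex where "invsqrt2 = 1 / complex_of_real (sqrt 2)"

lemma invsqrt2_sq: "invsqrt2 * invsqrt2 = 1/2"
  unfolding invsqrt2_def by (simp flip: of_real_mult)

lemma invsqrt2_simps[simp]: "cnj invsqrt2 = invsqrt2" "invsqrt2 \<noteq> 0"
  unfolding invsqrt2_def by simp_all

lemma ket_dims[simp]: "dim_vec ket0 = 2" "dim_vec ket1 = 2" "dim_vec ketp = 2" "dim_vec ketm = 2"
  by (simp_all add: ket0_def ket1_def ketp_def ketm_def)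

lemma ket_entries[simp]: "ket0 $ 0 = 1" "ket0 $ 1 = 0" "ket1 $ 0 = 0" "ket1 $ 1 = 1"
  "ketp $ 0 = invsqrt2" "ketp $ 1 = invsqrt2" "ketm $ 0 = invsqrt2" "ketm $ 1 = - invsqrt2"
  "ket0 $ Suc 0 = 0" "ket1 $ Suc 0 = 1" "ketp $ Suc 0 = invsqrt2" "ketm $ Suc 0 = - invsqrt2"
  by (simp_all add: ket0_def ket1_def ketp_def ketm_def invsqrt2_def)

abbreviation ket00 :: "complex vec" where "ket00 \<equiv> kron_vec ket0 ket0"
abbreviation ketpp :: "complex vec" where "ketpp \<equiv> kron_vec ketp ketp"

lemma two_qubit_dims[simp]:
  "dim_vec ket00 = 4" "dim_vec ketpp = 4" "dim_vec (psi_unnorm a b) = 4"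
  by (simp_all add: psi_unnorm_def kron_vec_def)

lemma ket00_entries[simp]: "ket00 $ 0 = 1" "ket00 $ 1 = 0" "ket00 $ 2 = 0" "ket00 $ 3 = 0"
  "ket00 $ Suc 0 = 0"
  by (simp_all add: kron_vec_def)

lemma ketpp_entries[simp]: "ketpp $ 0 = 1/2" "ketpp $ 1 = 1/2" "ketpp $ 2 = 1/2" "ketpp $ 3 = 1/2"
  "ketpp $ Suc 0 = 1/2"
  by (simp_all add: kron_vec_def invsqrt2_sq)

lemma psi_unnorm_entries[simp]: "psi_unnorm a b $ 0 = 0" "psi_unnorm a b $ 1 = b * invsqrt2"
  "psi_unnorm a b $ 2 = a * invsqrt2" "psi_unnorm a b $ 3 = - a * invsqrt2 - b * invsqrt2"
  "psi_unnorm a b $ Suc 0 = b * invsqrt2"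
  by (simp_all add: psi_unnorm_def kron_vec_def)

lemma psi_unnorm_carrier: "psi_unnorm a b \<in> carrier_vec 4"
  by (rule carrier_vecI) simp

lemma rho1_carrier: "rho1 \<in> carrier_mat 4 4"
  by (simp add: rho1_def proj_def kron_vec_def)

lemma rho1_entry:
  "j < 4 \<Longrightarrow> k < 4 \<Longrightarrow> rho1 $$ (j,k) = 1/2 * (ket00$j * cnj (ket00$k) + ketpp$j * cnj (ketpp$k))"
  by (simp add: rho1_def proj_def kron_vec_def)

lemma trace_sandwich_rho1:
  assumes M: "M \<in> carrier_mat n 4"
  shows "mtrace (M * rho1 * adj M) =
    1/2 * (cinner (M *\<^sub>v ket00) (M *\<^sub>v ket00) + cinner (M *\<^sub>v ketpp) (M *\<^sub>v ketpp))"
proof -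
  let ?S = "\<lambda>v. \<Sum>i<n. \<Sum>k<4. \<Sum>j<4. M$$(i,j) * (v$j * cnj (v$k)) * cnj (M$$(i,k))"
  have "mtrace (M * rho1 * adj M) = (\<Sum>i<n. \<Sum>k<4. \<Sum>j<4.
      M$$(i,j) * (1/2 * (ket00$j * cnj (ket00$k) + ketpp$j * cnj (ketpp$k))) * cnj (M$$(i,k)))"
    by (simp add: trace_sandwich[OF M rho1_carrier] rho1_entry)
  also have "\<dots> = 1/2 * (?S ket00 + ?S ketpp)"
    by (simp add: sum_distrib_left sum.distrib algebra_simps)
  also have "\<dots> = 1/2 * (mtrace (M * proj ket00 * adj M) + mtrace (M * proj ketpp * adj M))"
    unfolding trace_sandwich[OF M proj_carrier[OF two_qubit_dims(1)]]
      trace_sandwich[OF M proj_carrier[OF two_qubit_dims(2)]]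
    by (simp add: proj_def)
  finally show ?thesis using M by (simp add: trace_sandwich_proj)
qed

definition psi_scale :: "complex \<Rightarrow> complex \<Rightarrow> complex" where
  "psi_scale a b = complex_of_real (1 / vnorm (psi_unnorm a b))"

lemma dim_psi[simp]: "dim_vec (psi a b) = 4"
  by (simp add: psi_def)

lemma psi_eq: "psi a b = psi_scale a b \<cdot>\<^sub>v psi_unnorm a b"
  by (simp add: psi_def psi_scale_def)

lemma psi_scale_nonzero: assumes "a \<noteq> 0" shows "psi_scale a b \<noteq> 0"
proof
  assume "psi_scale a b = 0"
  hence "(\<Sum>i<4. (cmod (psi_unnorm a b $ i))\<^sup>2) = 0"
    by (simp add: psi_scale_def vnorm_def)
  hence "psi_unnorm a b $ 2 = 0" by (intro sum_sq_eq_0) simp_all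
  thus False using assms by simp
qed

lemma psi_nonzero: "a \<noteq> 0 \<Longrightarrow> psi a b $ 2 \<noteq> 0"
  using psi_scale_nonzero[of a b] by (simp add: psi_eq)

lemma rho1_rho3_orthogonal: "mtrace (rho1 * rho3 a b) = 0"
proof -
  have "mtrace (rho1 * rho3 a b) = (\<Sum>i<4. \<Sum>j<4. rho1$$(i,j) * (psi a b $ j * cnj (psi a b $ i)))"
    using rho1_carrier unfolding mtrace_def rho3_def
    by (simp add: proj_def scalar_prod_def atLeast0LessThan)
  also have "\<dots> = 0"
    unfolding sum_lessThan_4 by (simp add: rho1_entry psi_eq algebra_simps)
  finally show ?thesis .
qed

lemma rho1_neq_rho3: "rho1 \<noteq> rho3 a b"
proof
  assume "rho1 = rho3 a b"
  hence "rho1 $$ (0,0) = rho3 a b $$ (0,0)" by simp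
  thus False by (simp add: rho1_entry rho3_def proj_def psi_eq)
qed

section \<open>The invariant along a branch of the protocol\<close>

text \<open>(I1): the branch operator keeps the support of \<open>rho1\<close> orthogonal to \<open>psi\<close>.\<close>
definition keeps_orthogonal :: "complex \<Rightarrow> complex \<Rightarrow> complex mat \<Rightarrow> bool" where
  "keeps_orthogonal a b M \<longleftrightarrow>
     cinner (M *\<^sub>v ket00) (M *\<^sub>v psi_unnorm a b) = 0 \<and> cinner (M *\<^sub>v ketpp) (M *\<^sub>v psi_unnorm a b) = 0"

text \<open>(I2) fails: the branch operator is a nonzero multiple of a local unitary.\<close>
definition scaled_local_unitary :: "complex mat \<Rightarrow> bool" where
  "scaled_local_unitary M \<longleftrightarrow> (\<exists>A B x y. A \<in> carrier_mat 2 2 \<and> B \<in> carrier_mat 2 2 \<and>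
     M = kron A B \<and> adj A * A = x \<cdot>\<^sub>m 1\<^sub>m 2 \<and> adj B * B = y \<cdot>\<^sub>m 1\<^sub>m 2 \<and> x \<noteq> 0 \<and> y \<noteq> 0)"

lemma scaled_local_unitary_one: "scaled_local_unitary (1\<^sub>m 4)"
proof -
  have "(1::complex) \<cdot>\<^sub>m 1\<^sub>m 2 = 1\<^sub>m 2" by (rule eq_matI) auto
  then show ?thesis
    unfolding scaled_local_unitary_def kron_one
    by (intro exI[of _ "1\<^sub>m 2"] exI[of _ "1::complex"]) (simp add: gram_one)
qed

lemma scaled_local_unitary_gram:
  assumes "scaled_local_unitary M"
  obtains c where "c \<noteq> 0" "M \<in> carrier_mat 4 4" "adj M * M = c \<cdot>\<^sub>m 1\<^sub>m 4"
proof -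
  obtain A B x y where A: "A \<in> carrier_mat 2 2" and B: "B \<in> carrier_mat 2 2" and MAB: "M = kron A B"
    and xA: "adj A * A = x \<cdot>\<^sub>m 1\<^sub>m 2" and yB: "adj B * B = y \<cdot>\<^sub>m 1\<^sub>m 2" and "x \<noteq> 0" "y \<noteq> 0"
    using assms unfolding scaled_local_unitary_def by blast
  have "adj M * M = (x * y) \<cdot>\<^sub>m 1\<^sub>m 4" unfolding MAB gram_kron[OF A B] xA yB kron_smult_one ..
  moreover have "M \<in> carrier_mat 4 4" unfolding MAB by (rule kron_carrier[OF A B])
  ultimately show ?thesis using that[of "x * y"] \<open>x \<noteq> 0\<close> \<open>y \<noteq> 0\<close> by simp
qed

text \<open>At a leaf one state has probability zero; this yields (I1), while a scaled local unitary
  would give both states positive probability.\<close>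
lemma leaf_invariant:
  assumes a: "a \<noteq> 0" and M: "M \<in> carrier_mat 4 4"
    and leaf: "mtrace (M * rho1 * adj M) = 0 \<or> mtrace (M * rho3 a b * adj M) = 0"
  shows "keeps_orthogonal a b M \<and> \<not> scaled_local_unitary M"
proof
  show "keeps_orthogonal a b M"
    using leaf
  proof
    assume "mtrace (M * rho1 * adj M) = 0"
    then have "\<forall>i<4. (M *\<^sub>v ket00) $ i = 0" "\<forall>i<4. (M *\<^sub>v ketpp) $ i = 0"
      using cinner_self_add_eq_0[of "M *\<^sub>v ket00" "M *\<^sub>v ketpp"] M
      by (auto simp: trace_sandwich_rho1)
    then show ?thesis unfolding keeps_orthogonal_def using M by (auto intro!: cinner_zero_left)
  next
    assume "mtrace (M * rho3 a b * adj M) = 0"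
    then have "cinner (M *\<^sub>v psi a b) (M *\<^sub>v psi a b) = 0"
      unfolding rho3_def trace_sandwich_proj[OF M dim_psi] .
    moreover have "M *\<^sub>v psi a b = psi_scale a b \<cdot>\<^sub>v (M *\<^sub>v psi_unnorm a b)"
      unfolding psi_eq by (rule mult_mat_vec[OF M psi_unnorm_carrier])
    ultimately have "psi_scale a b * (M *\<^sub>v psi_unnorm a b) $ i = 0" if "i < 4" for i
      using cinner_self_eq_0[of "M *\<^sub>v psi a b" i] M that by simp
    then have "\<forall>i<4. (M *\<^sub>v psi_unnorm a b) $ i = 0"
      using psi_scale_nonzero[OF a] by simp
    then show ?thesis unfolding keeps_orthogonal_def using M by (auto intro!: cinner_zero_right)
  qed
  show "\<not> scaled_local_unitary M"
  proof
    assume "scaled_local_unitary M"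
    then obtain c where c: "c \<noteq> 0" and E: "adj M * M = c \<cdot>\<^sub>m 1\<^sub>m 4"
      by (rule scaled_local_unitary_gram)
    have "mtrace (M * rho1 * adj M) = c"
      unfolding trace_sandwich_rho1[OF M] cinner_mult_mat[OF M two_qubit_dims(1,1)]
        cinner_mult_mat[OF M two_qubit_dims(2,2)] E
        cinner_smult_one[OF two_qubit_dims(1)] cinner_smult_one[OF two_qubit_dims(2)]
      by (simp add: cinner_def sum_lessThan_4)
    moreover have "mtrace (M * rho3 a b * adj M) = c * cinner (psi a b) (psi a b)"
      unfolding rho3_def trace_sandwich_proj[OF M dim_psi] cinner_mult_mat[OF M dim_psi dim_psi] E
        cinner_smult_one[OF dim_psi] ..
    moreover have "cinner (psi a b) (psi a b) \<noteq> 0"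
      using cinner_self_eq_0[of "psi a b" 2] psi_nonzero[OF a] by auto
    ultimately show False using leaf c by simp
  qed
qed

lemma keeps_orthogonal_resolution:
  assumes N: "\<forall>K\<in>set Ks. N K \<in> carrier_mat 4 4" and M: "M \<in> carrier_mat 4 4"
    and S: "resolves_identity 4 (map (\<lambda>K. adj (N K) * N K) Ks)"
    and H: "\<forall>K\<in>set Ks. keeps_orthogonal a b (N K * M)"
  shows "keeps_orthogonal a b M"
proof -
  have branch: "cinner ((N K * M) *\<^sub>v v) ((N K * M) *\<^sub>v psi_unnorm a b) =
      cinner (M *\<^sub>v v) ((adj (N K) * N K) *\<^sub>v (M *\<^sub>v psi_unnorm a b))"
    if K: "K \<in> set Ks" and v: "dim_vec v = 4" for K v
  proof -
    have NK: "N K \<in> carrier_mat 4 4" using N K by auto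
    have "(N K * M) *\<^sub>v u = N K *\<^sub>v (M *\<^sub>v u)" if "dim_vec u = 4" for u
      using that by (intro assoc_mult_mat_vec[OF NK M] carrier_vecI)
    then show ?thesis using v M by (simp add: cinner_mult_mat[OF NK])
  qed
  have "cinner (M *\<^sub>v v) (M *\<^sub>v psi_unnorm a b) = 0" if v: "dim_vec v = 4"
      and Hv: "\<forall>K\<in>set Ks. cinner ((N K * M) *\<^sub>v v) ((N K * M) *\<^sub>v psi_unnorm a b) = 0" for v
  proof -
    have "cinner (M *\<^sub>v v) (M *\<^sub>v psi_unnorm a b) =
        (\<Sum>K\<leftarrow>Ks. cinner (M *\<^sub>v v) ((adj (N K) * N K) *\<^sub>v (M *\<^sub>v psi_unnorm a b)))"
      using N M S by (intro cinner_resolution[symmetric]) (auto intro: gram_carrier)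
    also have "\<dots> = (\<Sum>K\<leftarrow>Ks. cinner ((N K * M) *\<^sub>v v) ((N K * M) *\<^sub>v psi_unnorm a b))"
      using branch v by (intro arg_cong[where f = sum_list] map_cong refl) simp
    also have "\<dots> = 0" using Hv by (induction Ks) auto
    finally show ?thesis .
  qed
  then show ?thesis using H unfolding keeps_orthogonal_def by simp
qed

lemma overlaps_left:
  assumes "F \<in> carrier_mat 2 2"
  shows "cinner ket00 (kron F (y \<cdot>\<^sub>m 1\<^sub>m 2) *\<^sub>v psi_unnorm a b) = y * a * invsqrt2 * F$$(0,1)"
    and "cinner ketpp (kron F (y \<cdot>\<^sub>m 1\<^sub>m 2) *\<^sub>v psi_unnorm a b) =
       y * b * invsqrt2 / 2 * (F$$(0,0) + F$$(1,0) - F$$(0,1) - F$$(1,1))"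
  using assms
  by (simp_all add: cinner_def kron_def sum_lessThan_4 scalar_prod_def atLeast0LessThan algebra_simps)

lemma overlaps_right:
  assumes "F \<in> carrier_mat 2 2"
  shows "cinner ket00 (kron (x \<cdot>\<^sub>m 1\<^sub>m 2) F *\<^sub>v psi_unnorm a b) = x * b * invsqrt2 * F$$(0,1)"
    and "cinner ketpp (kron (x \<cdot>\<^sub>m 1\<^sub>m 2) F *\<^sub>v psi_unnorm a b) =
       x * a * invsqrt2 / 2 * (F$$(0,0) + F$$(1,0) - F$$(0,1) - F$$(1,1))"
  using assms
  by (simp_all add: cinner_def kron_def sum_lessThan_4 scalar_prod_def atLeast0LessThan algebra_simps)

lemma keeps_orthogonal_kron_left:
  assumes ab: "a * b \<noteq> 0" and G: "G \<in> carrier_mat 2 2" and B: "B \<in> carrier_mat 2 2"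
    and yB: "adj B * B = y \<cdot>\<^sub>m 1\<^sub>m 2" and y: "y \<noteq> 0"
    and O: "keeps_orthogonal a b (kron G B)"
  shows "adj G * G = (adj G * G) $$ (0,0) \<cdot>\<^sub>m 1\<^sub>m 2"
proof -
  let ?F = "adj G * G"
  have F: "?F \<in> carrier_mat 2 2" by (rule gram_carrier[OF G])
  have gram: "adj (kron G B) * kron G B = kron ?F (y \<cdot>\<^sub>m 1\<^sub>m 2)"
    unfolding gram_kron[OF G B] yB ..
  have GB: "kron G B \<in> carrier_mat 4 4" by (rule kron_carrier[OF G B])
  have "cinner ket00 (kron ?F (y \<cdot>\<^sub>m 1\<^sub>m 2) *\<^sub>v psi_unnorm a b) = 0"
    and "cinner ketpp (kron ?F (y \<cdot>\<^sub>m 1\<^sub>m 2) *\<^sub>v psi_unnorm a b) = 0"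
    using O unfolding keeps_orthogonal_def gram[symmetric]
    by (simp_all add: cinner_mult_mat[OF GB])
  then show ?thesis
    using ab y by (intro hermitian_2x2_scalar[OF F gram_hermitian[OF G]]) (auto simp: overlaps_left[OF F])
qed

lemma keeps_orthogonal_kron_right:
  assumes ab: "a * b \<noteq> 0" and A: "A \<in> carrier_mat 2 2" and G: "G \<in> carrier_mat 2 2"
    and xA: "adj A * A = x \<cdot>\<^sub>m 1\<^sub>m 2" and x: "x \<noteq> 0"
    and O: "keeps_orthogonal a b (kron A G)"
  shows "adj G * G = (adj G * G) $$ (0,0) \<cdot>\<^sub>m 1\<^sub>m 2"
proof -
  let ?F = "adj G * G"
  have F: "?F \<in> carrier_mat 2 2" by (rule gram_carrier[OF G])
  have gram: "adj (kron A G) * kron A G = kron (x \<cdot>\<^sub>m 1\<^sub>m 2) ?F"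
    unfolding gram_kron[OF A G] xA ..
  have AG: "kron A G \<in> carrier_mat 4 4" by (rule kron_carrier[OF A G])
  have "cinner ket00 (kron (x \<cdot>\<^sub>m 1\<^sub>m 2) ?F *\<^sub>v psi_unnorm a b) = 0"
    and "cinner ketpp (kron (x \<cdot>\<^sub>m 1\<^sub>m 2) ?F *\<^sub>v psi_unnorm a b) = 0"
    using O unfolding keeps_orthogonal_def gram[symmetric]
    by (simp_all add: cinner_mult_mat[OF AG])
  then show ?thesis
    using ab x by (intro hermitian_2x2_scalar[OF F gram_hermitian[OF G]]) (auto simp: overlaps_right[OF F])
qed

lemma scaled_local_unitary_step_left:
  assumes ab: "a * b \<noteq> 0" and m: "is_local_measurement Ks" and P: "scaled_local_unitary M"
    and O: "\<forall>K\<in>set Ks. keeps_orthogonal a b (kron K (1\<^sub>m 2) * M)"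
  shows "\<exists>K\<in>set Ks. scaled_local_unitary (kron K (1\<^sub>m 2) * M)"
proof -
  obtain A B x y where A: "A \<in> carrier_mat 2 2" and B: "B \<in> carrier_mat 2 2" and MAB: "M = kron A B"
    and xA: "adj A * A = x \<cdot>\<^sub>m 1\<^sub>m 2" and yB: "adj B * B = y \<cdot>\<^sub>m 1\<^sub>m 2" and x: "x \<noteq> 0" and y: "y \<noteq> 0"
    using P unfolding scaled_local_unitary_def by blast
  obtain K where K: "K \<in> set Ks" and nz: "(adj (K * A) * (K * A)) $$ (0,0) \<noteq> 0"
    using local_measurement_nonvanishing_branch[OF m A] xA x by auto
  have Kc: "K \<in> carrier_mat 2 2" by (rule local_measurement_carrier[OF m K])
  have KA: "K * A \<in> carrier_mat 2 2" using Kc A by (rule mult_carrier_mat)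
  have branch: "kron K (1\<^sub>m 2) * M = kron (K * A) B"
    unfolding MAB kron_mult[OF Kc one_carrier_mat A B] using B by simp
  have "keeps_orthogonal a b (kron (K * A) B)" using O K branch by metis
  then have "adj (K * A) * (K * A) = (adj (K * A) * (K * A)) $$ (0,0) \<cdot>\<^sub>m 1\<^sub>m 2"
    by (rule keeps_orthogonal_kron_left[OF ab KA B yB y])
  then have "scaled_local_unitary (kron (K * A) B)"
    unfolding scaled_local_unitary_def using KA B yB y nz by blast
  then show ?thesis using K branch by metis
qed

lemma scaled_local_unitary_step_right:
  assumes ab: "a * b \<noteq> 0" and m: "is_local_measurement Ks" and P: "scaled_local_unitary M"
    and O: "\<forall>K\<in>set Ks. keeps_orthogonal a b (kron (1\<^sub>m 2) K * M)"
  shows "\<exists>K\<in>set Ks. scaled_local_unitary (kron (1\<^sub>m 2) K * M)"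
proof -
  obtain A B x y where A: "A \<in> carrier_mat 2 2" and B: "B \<in> carrier_mat 2 2" and MAB: "M = kron A B"
    and xA: "adj A * A = x \<cdot>\<^sub>m 1\<^sub>m 2" and yB: "adj B * B = y \<cdot>\<^sub>m 1\<^sub>m 2" and x: "x \<noteq> 0" and y: "y \<noteq> 0"
    using P unfolding scaled_local_unitary_def by blast
  obtain K where K: "K \<in> set Ks" and nz: "(adj (K * B) * (K * B)) $$ (0,0) \<noteq> 0"
    using local_measurement_nonvanishing_branch[OF m B] yB y by auto
  have Kc: "K \<in> carrier_mat 2 2" by (rule local_measurement_carrier[OF m K])
  have KB: "K * B \<in> carrier_mat 2 2" using Kc B by (rule mult_carrier_mat)
  have branch: "kron (1\<^sub>m 2) K * M = kron A (K * B)"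
    unfolding MAB kron_mult[OF one_carrier_mat Kc A B] using A by simp
  have "keeps_orthogonal a b (kron A (K * B))" using O K branch by metis
  then have "adj (K * B) * (K * B) = (adj (K * B) * (K * B)) $$ (0,0) \<cdot>\<^sub>m 1\<^sub>m 2"
    by (rule keeps_orthogonal_kron_right[OF ab A KB xA x])
  then have "scaled_local_unitary (kron A (K * B))"
    unfolding scaled_local_unitary_def using KB A xA x nz by blast
  then show ?thesis using K branch by metis
qed

lemma protocol_invariant:
  assumes ab: "a * b \<noteq> 0"
  shows "locc_from {rho1, rho3 a b} M \<Longrightarrow> M \<in> carrier_mat 4 4 \<Longrightarrow>
    keeps_orthogonal a b M \<and> \<not> scaled_local_unitary M"
proof (induction rule: locc_from.induct)
  case (leaf \<sigma> M)
  then have "mtrace (M * rho1 * adj M) = 0 \<or> mtrace (M * rho3 a b * adj M) = 0"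
    using rho1_neq_rho3[of a b] by auto
  then show ?case using leaf_invariant[OF _ leaf.prems] ab by auto
next
  case (alice Ks M)
  have N: "\<forall>K\<in>set Ks. kron K (1\<^sub>m 2) \<in> carrier_mat 4 4"
    using local_measurement_carrier[OF alice.hyps(1)] by (auto intro: kron_carrier)
  then have "\<forall>K\<in>set Ks. keeps_orthogonal a b (kron K (1\<^sub>m 2) * M) \<and>
      \<not> scaled_local_unitary (kron K (1\<^sub>m 2) * M)"
    using alice.IH alice.prems by auto
  then show ?case
    using keeps_orthogonal_resolution[OF N alice.prems local_measurement_left[OF alice.hyps(1)]]
      scaled_local_unitary_step_left[OF ab alice.hyps(1)] by blast
next
  case (bob Ks M)
  have N: "\<forall>K\<in>set Ks. kron (1\<^sub>m 2) K \<in> carrier_mat 4 4"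
    using local_measurement_carrier[OF bob.hyps(1)] by (auto intro: kron_carrier)
  then have "\<forall>K\<in>set Ks. keeps_orthogonal a b (kron (1\<^sub>m 2) K * M) \<and>
      \<not> scaled_local_unitary (kron (1\<^sub>m 2) K * M)"
    using bob.IH bob.prems by auto
  then show ?case
    using keeps_orthogonal_resolution[OF N bob.prems local_measurement_right[OF bob.hyps(1)]]
      scaled_local_unitary_step_right[OF ab bob.hyps(1)] by blast
qed

theorem mainTheorem8:
  fixes \<alpha> \<beta> :: complex
  assumes "\<alpha> * \<beta> \<noteq> 0"
  shows "mtrace (rho1 * rho3 \<alpha> \<beta>) = 0 \<and> \<not> locc_perfectly_distinguishable {rho1, rho3 \<alpha> \<beta>}"
proof
  show "mtrace (rho1 * rho3 \<alpha> \<beta>) = 0" by (rule rho1_rho3_orthogonal)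
  show "\<not> locc_perfectly_distinguishable {rho1, rho3 \<alpha> \<beta>}"
  proof
    assume "locc_perfectly_distinguishable {rho1, rho3 \<alpha> \<beta>}"
    then have "locc_from {rho1, rho3 \<alpha> \<beta>} (1\<^sub>m 4)"
      unfolding locc_perfectly_distinguishable_def .
    then have "keeps_orthogonal \<alpha> \<beta> (1\<^sub>m 4) \<and> \<not> scaled_local_unitary (1\<^sub>m 4)"
      by (rule protocol_invariant[OF assms _ one_carrier_mat])
    then show False using scaled_local_unitary_one by simp
  qed
qed

end
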